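(* Let $\mathbf L\in\mathbb R_+^{n\times k}$. Then $\mathrm{CCdim}(\mathbf L)\le\operatorname{rank}(\mathbf L)$.
   Context: Notation: $[m]=\{1,\dots,m\}$; $\Delta_n=\{\mathbf p\in\mathbb R_+^n:\sum_i p_i=1\}$. A loss matrix $\mathbf L\in\mathbb R_+^{n\times k}$ has columns $\boldsymbol\ell_t$, $t\in[k]$. Standing assumption: for each $t\in[k]$ there is $\mathbf p\in\Delta_n$ with $\operatorname{argmin}_{t'}\mathbf p^\top\boldsymbol\ell_{t'}=\{t\}$. A surrogate loss $\boldsymbol\psi:\mathcal C\to\mathbb R_+^n$ ($\mathcal C\subseteq\mathbb R^d$ convex) is $\mathbf L$-calibrated if there is $\mathrm{pred}:\mathcal C\to[k]$ such that for all $\mathbf p\in\Delta_n$: $\inf_{\mathbf u\in\mathcal C:\mathrm{pred}(\mathbf u)\notin\operatorname{argmin}_t\mathbf p^\top\boldsymbol\ell_t}\mathbf p^\top\boldsymbol\psi(\mathbf u)>\inf_{\mathbf u\in\mathcal C}\mathbf p^\top\boldsymbol\psi(\mathbf u)$. $\mathrm{CCdim}(\mathbf L)$ is the smallest $d\in\mathbb Z_+$ for which there exist a convex set $\mathcal C\subseteq\mathbb R^d$ and a convex (componentwise convex) $\mathbf L$-calibrated surrogate $\boldsymbol\psi:\mathcal C\to\mathbb R_+^n$ ($\infty$ if none exists). *)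

theory Defs
  imports "HOL-Analysis.Analysis" "HOL-Library.Extended_Nat"
begin

text \<open>Loss matrix L :: real^'k^'n : rows indexed by outcomes ('n, size n),
  columns indexed by predictions ('k, size k). Column t is the loss vector ell_t.\<close>

definition prob_simplex :: "(real^'n::finite) set" where
  "prob_simplex = {p. (\<forall>i. 0 \<le> p $ i) \<and> (\<Sum>i\<in>UNIV. p $ i) = 1}"

definition nonneg_loss_matrix :: "real^'k::finite^'n::finite \<Rightarrow> bool" where
  "nonneg_loss_matrix L \<longleftrightarrow> (\<forall>i t. 0 \<le> L $ i $ t)"

definition opt_set :: "real^'k::finite^'n::finite \<Rightarrow> real^'n \<Rightarrow> 'k set" where
  "opt_set L p = {t. \<forall>t'. p \<bullet> column t L \<le> p \<bullet> column t' L}"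

definition standing_assumption :: "real^'k::finite^'n::finite \<Rightarrow> bool" where
  "standing_assumption L \<longleftrightarrow> (\<forall>t. \<exists>p\<in>prob_simplex. opt_set L p = {t})"

text \<open>R^d, represented as functions nat => real vanishing from index d on.\<close>
definition Rd :: "nat \<Rightarrow> (nat \<Rightarrow> real) set" where
  "Rd d = {u. \<forall>i\<ge>d. u i = 0}"

definition convex_fset :: "(nat \<Rightarrow> real) set \<Rightarrow> bool" where
  "convex_fset C \<longleftrightarrow> (\<forall>u\<in>C. \<forall>v\<in>C. \<forall>a::real. 0 \<le> a \<and> a \<le> 1 \<longrightarrow>
      (\<lambda>i. a * u i + (1 - a) * v i) \<in> C)"

definition convex_fun_on :: "(nat \<Rightarrow> real) set \<Rightarrow> ((nat \<Rightarrow> real) \<Rightarrow> real) \<Rightarrow> bool" where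
  "convex_fun_on C f \<longleftrightarrow> (\<forall>u\<in>C. \<forall>v\<in>C. \<forall>a::real. 0 \<le> a \<and> a \<le> 1 \<longrightarrow>
      f (\<lambda>i. a * u i + (1 - a) * v i) \<le> a * f u + (1 - a) * f v)"

text \<open>L-calibration of psi : C -> R_+^n (infima taken in the extended reals,
  so an infimum over the empty set is +infinity).\<close>
definition calibrated ::
  "real^'k::finite^'n::finite \<Rightarrow> (nat \<Rightarrow> real) set \<Rightarrow> ((nat \<Rightarrow> real) \<Rightarrow> real^'n) \<Rightarrow> bool" where
  "calibrated L C psi \<longleftrightarrow> (\<exists>pred :: (nat \<Rightarrow> real) \<Rightarrow> 'k. \<forall>p\<in>prob_simplex.
      (INF u\<in>{u\<in>C. pred u \<notin> opt_set L p}. ereal (p \<bullet> psi u))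
        > (INF u\<in>C. ereal (p \<bullet> psi u)))"

definition convex_calibrated_surrogate ::
  "real^'k::finite^'n::finite \<Rightarrow> nat \<Rightarrow> (nat \<Rightarrow> real) set \<Rightarrow> ((nat \<Rightarrow> real) \<Rightarrow> real^'n) \<Rightarrow> bool" where
  "convex_calibrated_surrogate L d C psi \<longleftrightarrow>
     C \<subseteq> Rd d \<and> convex_fset C \<and>
     (\<forall>u\<in>C. \<forall>y. 0 \<le> psi u $ y) \<and>
     (\<forall>y. convex_fun_on C (\<lambda>u. psi u $ y)) \<and>
     calibrated L C psi"

definition CCdim :: "real^'k::finite^'n::finite \<Rightarrow> enat" where
  "CCdim L = (INF d\<in>{d. \<exists>C psi. convex_calibrated_surrogate L d C psi}. enat d)"

end

theory Submission
  imports Defs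
begin

(* Let r = rank L.  Every loss column is a combination of r fixed vectors
   b_0, ..., b_{r-1} in R^n:  ell_t = sum_j c t j * b_j.  Take C = R^r and the
   surrogate  psi_y(u) = sum_{j<r} (u_j - b_j(y))^2,  which is nonnegative and
   convex.  Its conditional risk is a shifted squared distance,
     p . psi(u) = |u - m(p)|^2 + K(p),   m(p)_j = p . b_j,
   and the linear score  u . c_t  evaluated at m(p) is exactly the expected loss
   p . ell_t.  Predicting the minimiser of this score is calibrated: minimisers
   of a linear score over finitely many t are stable under small perturbations
   of u, so a non-optimal prediction forces u to stay a fixed distance away from
   m(p), which costs a fixed amount of surrogate risk. *)

lemma column_expansion:
  fixes L :: "real^'k::finite^'n::finite"
  obtains b :: "nat \<Rightarrow> real^'n" and c :: "'k \<Rightarrow> nat \<Rightarrow> real"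
  where "\<And>t. column t L = (\<Sum>j<rank L. c t j *\<^sub>R b j)"
proof -
  obtain B where B: "B \<subseteq> columns L" "independent B" "columns L \<subseteq> span B"
      "card B = dim (columns L)"
    by (rule basis_exists)
  have fin: "finite B" using B(2) independent_bound by blast
  obtain e where e: "bij_betw e {..<card B} B"
    using ex_bij_betw_nat_finite[OF fin] by (auto simp: atLeast0LessThan)
  have "\<forall>t. \<exists>a. column t L = (\<Sum>v\<in>B. a v *\<^sub>R v)"
  proof
    fix t
    have "column t L \<in> span B" using B(3) by (auto simp: columns_def)
    then show "\<exists>a. column t L = (\<Sum>v\<in>B. a v *\<^sub>R v)" using span_finite[OF fin] by auto
  qed
  then obtain a where a: "\<And>t. column t L = (\<Sum>v\<in>B. a t v *\<^sub>R v)" by metis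
  have "column t L = (\<Sum>j<rank L. a t (e j) *\<^sub>R e j)" for t
    using a[of t] sum.reindex_bij_betw[OF e, of "\<lambda>v. a t v *\<^sub>R v"] B(4)
    by (simp add: column_rank_def)
  then show ?thesis by (rule that)
qed

definition sq_surrogate :: "(nat \<Rightarrow> real^'n::finite) \<Rightarrow> nat \<Rightarrow> (nat \<Rightarrow> real) \<Rightarrow> real^'n" where
  "sq_surrogate b r u = (\<chi> y. \<Sum>j<r. (u j - b j $ y)^2)"

lemma sq_surrogate_nonneg: "0 \<le> sq_surrogate b r u $ y"
  by (simp add: sq_surrogate_def sum_nonneg)

lemma square_convex_combination:
  fixes a x y z :: real
  assumes "0 \<le> a" "a \<le> 1"
  shows "(a * x + (1 - a) * y - z)^2 \<le> a * (x - z)^2 + (1 - a) * (y - z)^2"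
proof -
  have "a * (x - z)^2 + (1 - a) * (y - z)^2 - (a * x + (1 - a) * y - z)^2
      = a * (1 - a) * (x - y)^2"
    by (simp add: power2_eq_square algebra_simps)
  moreover have "0 \<le> a * (1 - a) * (x - y)^2" using assms by simp
  ultimately show ?thesis by linarith
qed

lemma sq_surrogate_convex: "convex_fun_on C (\<lambda>u. sq_surrogate b r u $ y)"
  unfolding convex_fun_on_def
proof (intro ballI allI impI)
  fix u v and a :: real
  assume a: "0 \<le> a \<and> a \<le> 1"
  have "(\<Sum>j<r. (a * u j + (1 - a) * v j - b j $ y)^2)
      \<le> (\<Sum>j<r. a * (u j - b j $ y)^2 + (1 - a) * (v j - b j $ y)^2)"
    using a by (intro sum_mono square_convex_combination) auto
  also have "\<dots> = a * (\<Sum>j<r. (u j - b j $ y)^2) + (1 - a) * (\<Sum>j<r. (v j - b j $ y)^2)"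
    by (simp add: sum.distrib sum_distrib_left)
  finally show "sq_surrogate b r (\<lambda>i. a * u i + (1 - a) * v i) $ y
      \<le> a * sq_surrogate b r u $ y + (1 - a) * sq_surrogate b r v $ y"
    by (simp add: sq_surrogate_def)
qed

lemma Rd_convex: "convex_fset (Rd d)"
  unfolding convex_fset_def Rd_def by auto

lemma weighted_square_deviation:
  fixes p v :: "real^'n::finite"
  assumes "(\<Sum>y\<in>UNIV. p $ y) = 1"
  shows "(\<Sum>y\<in>UNIV. p $ y * (x - v $ y)^2)
       = (x - p \<bullet> v)^2 + (\<Sum>y\<in>UNIV. p $ y * (p \<bullet> v - v $ y)^2)"
proof -
  let ?m = "p \<bullet> v"
  have pointwise: "p $ y * (x - v $ y)^2
      = (x - ?m)^2 * p $ y + 2 * (x - ?m) * (?m * p $ y - p $ y * v $ y)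
        + p $ y * (?m - v $ y)^2" for y
    by (simp add: power2_eq_square algebra_simps)
  have "(\<Sum>y\<in>UNIV. p $ y * (x - v $ y)^2)
      = (x - ?m)^2 * (\<Sum>y\<in>UNIV. p $ y)
        + 2 * (x - ?m) * (?m * (\<Sum>y\<in>UNIV. p $ y) - (\<Sum>y\<in>UNIV. p $ y * v $ y))
        + (\<Sum>y\<in>UNIV. p $ y * (?m - v $ y)^2)"
    unfolding pointwise
    by (simp add: sum.distrib sum_distrib_left[symmetric] sum_subtractf right_diff_distrib)
  also have "(\<Sum>y\<in>UNIV. p $ y * v $ y) = ?m" by (simp add: inner_vec_def)
  finally show ?thesis using assms by simp
qed

lemma sq_surrogate_risk:
  fixes p :: "real^'n::finite"
  assumes "(\<Sum>y\<in>UNIV. p $ y) = 1"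
  shows "p \<bullet> sq_surrogate b r u
       = (\<Sum>j<r. (u j - p \<bullet> b j)^2) + (\<Sum>j<r. \<Sum>y\<in>UNIV. p $ y * (p \<bullet> b j - b j $ y)^2)"
proof -
  have "p \<bullet> sq_surrogate b r u = (\<Sum>y\<in>UNIV. p $ y * (\<Sum>j<r. (u j - b j $ y)^2))"
    by (simp add: inner_vec_def sq_surrogate_def)
  also have "\<dots> = (\<Sum>j<r. \<Sum>y\<in>UNIV. p $ y * (u j - b j $ y)^2)"
    unfolding sum_distrib_left by (rule sum.swap)
  also have "\<dots> = (\<Sum>j<r. (u j - p \<bullet> b j)^2 + (\<Sum>y\<in>UNIV. p $ y * (p \<bullet> b j - b j $ y)^2))"
    by (rule sum.cong[OF refl weighted_square_deviation[OF assms]])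
  finally show ?thesis by (simp add: sum.distrib)
qed

definition minimises :: "('k \<Rightarrow> real) \<Rightarrow> 'k \<Rightarrow> bool" where
  "minimises f t \<longleftrightarrow> (\<forall>t'. f t \<le> f t')"

definition lin_score :: "('k \<Rightarrow> nat \<Rightarrow> real) \<Rightarrow> nat \<Rightarrow> (nat \<Rightarrow> real) \<Rightarrow> 'k \<Rightarrow> real" where
  "lin_score c r u t = (\<Sum>j<r. u j * c t j)"

lemma finite_min_gap:
  fixes f :: "'k::finite \<Rightarrow> real"
  obtains g where "0 < g" "\<And>t. f t < Min (range f) + g \<Longrightarrow> f t = Min (range f)"
proof -
  let ?\<mu> = "Min (range f)"
  define G where "G = {f t - ?\<mu> | t. f t \<noteq> ?\<mu>} \<union> {1}"
  have fin: "finite G" by (simp add: G_def)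
  have "f t \<ge> ?\<mu>" for t by simp
  then have "0 < Min G" using fin by (auto simp: G_def order_le_neq_trans)
  moreover have "f t = ?\<mu>" if "f t < ?\<mu> + Min G" for t
  proof (rule ccontr)
    assume "f t \<noteq> ?\<mu>"
    then have "Min G \<le> f t - ?\<mu>" using fin by (intro Min_le) (auto simp: G_def)
    with that show False by simp
  qed
  ultimately show ?thesis by (rule that)
qed

lemma lin_score_perturbation:
  assumes "\<And>j. j < r \<Longrightarrow> \<bar>u j - m j\<bar> \<le> \<eta>"
  shows "\<bar>lin_score c r u t - lin_score c r m t\<bar> \<le> \<eta> * (\<Sum>j<r. \<bar>c t j\<bar>)"
proof -
  have "\<bar>lin_score c r u t - lin_score c r m t\<bar> = \<bar>\<Sum>j<r. (u j - m j) * c t j\<bar>"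
    by (simp add: lin_score_def sum_subtractf left_diff_distrib)
  also have "\<dots> \<le> (\<Sum>j<r. \<bar>u j - m j\<bar> * \<bar>c t j\<bar>)"
    by (rule order_trans[OF sum_abs]) (simp add: abs_mult)
  also have "\<dots> \<le> (\<Sum>j<r. \<eta> * \<bar>c t j\<bar>)"
    using assms by (intro sum_mono mult_right_mono) auto
  finally show ?thesis by (simp add: sum_distrib_left)
qed

lemma lin_score_minimiser_stable:
  fixes c :: "'k::finite \<Rightarrow> nat \<Rightarrow> real"
  obtains \<eta> where "0 < \<eta>"
    "\<And>u t. (\<And>j. j < r \<Longrightarrow> \<bar>u j - m j\<bar> < \<eta>) \<Longrightarrow> minimises (lin_score c r u) t
       \<Longrightarrow> minimises (lin_score c r m) t"
proof -
  let ?f = "lin_score c r m"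
  let ?\<mu> = "Min (range ?f)"
  obtain g where g: "0 < g" "\<And>t. ?f t < ?\<mu> + g \<Longrightarrow> ?f t = ?\<mu>"
    using finite_min_gap by blast
  have "?\<mu> \<in> range ?f" by (rule Min_in) auto
  then obtain t0 where t0: "?f t0 = ?\<mu>" by (metis rangeE)
  define A where "A = (\<Sum>t\<in>UNIV. \<Sum>j<r. \<bar>c t j\<bar>)"
  have A: "(\<Sum>j<r. \<bar>c t j\<bar>) \<le> A" for t
    unfolding A_def by (rule member_le_sum) (auto intro: sum_nonneg)
  have A0: "0 \<le> A" unfolding A_def by (auto intro!: sum_nonneg)
  define \<eta> where "\<eta> = g / (2 * A + 1)"
  have \<eta>0: "0 < \<eta>" using g(1) A0 by (simp add: \<eta>_def)
  have \<eta>A: "2 * \<eta> * A < g"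
  proof -
    have "\<eta> * (2 * A + 1) = g" using A0 by (simp add: \<eta>_def)
    then show ?thesis using \<eta>0 by (simp add: algebra_simps)
  qed
  show ?thesis
  proof (rule that[OF \<eta>0])
    fix u t
    assume near: "\<And>j. j < r \<Longrightarrow> \<bar>u j - m j\<bar> < \<eta>"
      and "minimises (lin_score c r u) t"
    then have min_u: "lin_score c r u t \<le> lin_score c r u t'" for t'
      by (simp add: minimises_def)
    have close: "\<bar>lin_score c r u s - ?f s\<bar> \<le> \<eta> * A" for s
    proof -
      have "\<bar>lin_score c r u s - ?f s\<bar> \<le> \<eta> * (\<Sum>j<r. \<bar>c s j\<bar>)"
        by (rule lin_score_perturbation) (simp add: near less_imp_le)
      also have "\<dots> \<le> \<eta> * A" using A \<eta>0 by (intro mult_left_mono) auto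
      finally show ?thesis .
    qed
    have "?f t \<le> lin_score c r u t + \<eta> * A" using close[of t] by linarith
    also have "\<dots> \<le> lin_score c r u t0 + \<eta> * A" using min_u[of t0] by simp
    also have "\<dots> \<le> ?\<mu> + 2 * \<eta> * A" using close[of t0] t0 by linarith
    also have "\<dots> < ?\<mu> + g" using \<eta>A by simp
    finally have "?f t = ?\<mu>" by (rule g(2))
    then show "minimises ?f t" by (simp add: minimises_def)
  qed
qed

lemma sq_surrogate_calibrated:
  fixes L :: "real^'k::finite^'n::finite"
  assumes expansion: "\<And>t. column t L = (\<Sum>j<r. c t j *\<^sub>R b j)"
  shows "calibrated L (Rd r) (sq_surrogate b r)"
  unfolding calibrated_def
proof (intro exI[of _ "\<lambda>u. arg_min_on (lin_score c r u) UNIV"] ballI)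
  fix p :: "real^'n"
  assume "p \<in> prob_simplex"
  then have sum1: "(\<Sum>y\<in>UNIV. p $ y) = 1" by (simp add: prob_simplex_def)
  let ?risk = "\<lambda>u. p \<bullet> sq_surrogate b r u"
  let ?bad = "{u \<in> Rd r. arg_min_on (lin_score c r u) UNIV \<notin> opt_set L p}"
  define m where "m j = (if j < r then p \<bullet> b j else 0)" for j
  define K where "K = (\<Sum>j<r. \<Sum>y\<in>UNIV. p $ y * (p \<bullet> b j - b j $ y)^2)"
  have risk: "?risk u = (\<Sum>j<r. (u j - m j)^2) + K" for u
    using sq_surrogate_risk[OF sum1, of b r u] by (simp add: m_def K_def)
  have score_m: "lin_score c r m t = p \<bullet> column t L" for t
    by (simp add: expansion lin_score_def inner_sum_right m_def mult.commute)
  then have opt: "opt_set L p = {t. minimises (lin_score c r m) t}"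
    by (simp add: opt_set_def minimises_def)
  obtain \<eta> where \<eta>0: "0 < \<eta>" and stable:
    "\<And>u t. (\<And>j. j < r \<Longrightarrow> \<bar>u j - m j\<bar> < \<eta>) \<Longrightarrow> minimises (lin_score c r u) t
       \<Longrightarrow> minimises (lin_score c r m) t"
    using lin_score_minimiser_stable[of r m c] by blast
  have far: "\<exists>j<r. \<eta> \<le> \<bar>u j - m j\<bar>" if "u \<in> ?bad" for u
  proof (rule ccontr)
    assume "\<not> ?thesis"
    then have "\<And>j. j < r \<Longrightarrow> \<bar>u j - m j\<bar> < \<eta>" by force
    moreover have "minimises (lin_score c r u) (arg_min_on (lin_score c r u) UNIV)"
      by (simp add: minimises_def arg_min_least)
    ultimately have "arg_min_on (lin_score c r u) UNIV \<in> opt_set L p"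
      unfolding opt by (blast intro: stable)
    with that show False by simp
  qed
  have "K + \<eta>^2 \<le> ?risk u" if bad: "u \<in> ?bad" for u
  proof -
    obtain j where j: "j < r" "\<eta> \<le> \<bar>u j - m j\<bar>" using far[OF bad] by blast
    have "\<eta>^2 \<le> (u j - m j)^2"
      using j \<eta>0 by (metis abs_le_square_iff abs_of_pos less_imp_le)
    also have "\<dots> \<le> (\<Sum>j<r. (u j - m j)^2)"
      by (rule member_le_sum) (use j in auto)
    finally show ?thesis using risk[of u] by simp
  qed
  then have "ereal (K + \<eta>^2) \<le> (INF u\<in>?bad. ereal (?risk u))"
    by (intro INF_greatest) simp
  moreover have "(INF u\<in>Rd r. ereal (?risk u)) \<le> ereal K"
    using INF_lower[of m "Rd r" "\<lambda>u. ereal (?risk u)"] risk[of m]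
    by (simp add: Rd_def m_def)
  moreover have "ereal K < ereal (K + \<eta>^2)" using \<eta>0 by simp
  ultimately show "(INF u\<in>?bad. ereal (?risk u)) > (INF u\<in>Rd r. ereal (?risk u))"
    by order
qed

theorem mainTheorem9:
  fixes L :: "real^'k::finite^'n::finite"
  assumes "nonneg_loss_matrix L"
    and "standing_assumption L"
  shows "CCdim L \<le> enat (rank L)"
proof -
  obtain b c where expansion: "\<And>t. column t L = (\<Sum>j<rank L. c t j *\<^sub>R b j)"
    using column_expansion[of L] by metis
  have "convex_calibrated_surrogate L (rank L) (Rd (rank L)) (sq_surrogate b (rank L))"
    unfolding convex_calibrated_surrogate_def
    using Rd_convex sq_surrogate_nonneg sq_surrogate_convex
      sq_surrogate_calibrated[OF expansion] by auto
  then show ?thesis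
    unfolding CCdim_def by (intro INF_lower2[of "rank L"]) auto
qed

end
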